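(* Let $f(x_1,x_2)=(-2+x_1+x_2)^2$ and $g(x_1,x_2)=1-x_1^2-x_2^2$. Although $f>0$ on $\{x\in\mathbb{R}^2: g(x)\geqslant 0\}$, there do not exist SDSOS polynomials $\sigma_0,\sigma_1$ (of any degree) such that $f=\sigma_0+\sigma_1 g$. Consequently there also do not exist DSOS polynomials $\sigma_0,\sigma_1$ with $f=\sigma_0+\sigma_1 g$.
   Context: For $\alpha\in\mathbb{N}^2$ write $x^\alpha=x_1^{\alpha_1}x_2^{\alpha_2}$. A polynomial is SDSOS (scaled diagonally-dominant sum of squares) if it is of the form $\sum_k (p_k x^{\alpha(k)}+q_k x^{\beta(k)})^2$ (finite sum) with $p_k,q_k\in\mathbb{R}$ and $\alpha(k),\beta(k)\in\mathbb{N}^2$. A polynomial is DSOS (diagonally-dominant sum of squares) if it is a finite nonnegative combination of polynomials of the forms $(x^\alpha)^2$, $(x^\alpha+x^\beta)^2$, $(x^\alpha-x^\beta)^2$ with $\alpha,\beta\in\mathbb{N}^2$; every DSOS polynomial is SDSOS. *)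

theory Defs
  imports Main "HOL.Real"
begin

text \<open>Polynomials in two real variables are represented by their polynomial functions
  on real x real (equality of polynomials over R coincides with equality of functions).\<close>

definition mono :: "nat \<times> nat \<Rightarrow> real \<times> real \<Rightarrow> real" where
  "mono \<alpha> x = fst x ^ fst \<alpha> * snd x ^ snd \<alpha>"

definition sdsos :: "(real \<times> real \<Rightarrow> real) \<Rightarrow> bool" where
  "sdsos \<sigma> \<longleftrightarrow> (\<exists>ts :: (real \<times> real \<times> (nat \<times> nat) \<times> (nat \<times> nat)) list.
     \<forall>x. \<sigma> x = (\<Sum>(p, q, \<alpha>, \<beta>)\<leftarrow>ts. (p * mono \<alpha> x + q * mono \<beta> x)^2))"

definition dsos :: "(real \<times> real \<Rightarrow> real) \<Rightarrow> bool" where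
  "dsos \<sigma> \<longleftrightarrow> (\<exists>(A :: (real \<times> (nat \<times> nat)) list)
                    (B :: (real \<times> (nat \<times> nat) \<times> (nat \<times> nat)) list)
                    (C :: (real \<times> (nat \<times> nat) \<times> (nat \<times> nat)) list).
     (\<forall>(c, _) \<in> set A. c \<ge> 0) \<and> (\<forall>(c, _) \<in> set B. c \<ge> 0) \<and> (\<forall>(c, _) \<in> set C. c \<ge> 0) \<and>
     (\<forall>x. \<sigma> x = (\<Sum>(c, \<alpha>)\<leftarrow>A. c * (mono \<alpha> x)^2)
               + (\<Sum>(c, \<alpha>, \<beta>)\<leftarrow>B. c * (mono \<alpha> x + mono \<beta> x)^2)
               + (\<Sum>(c, \<alpha>, \<beta>)\<leftarrow>C. c * (mono \<alpha> x - mono \<beta> x)^2)))"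

definition f3 :: "real \<times> real \<Rightarrow> real" where
  "f3 x = (-2 + fst x + snd x)^2"

definition g3 :: "real \<times> real \<Rightarrow> real" where
  "g3 x = 1 - (fst x)^2 - (snd x)^2"

end

theory Submission
  imports Defs Complex_Main
begin

text \<open>Evaluate at the four points (\<plusminus>r, \<plusminus>r) and form L h = h(r,r) + h(r,-r) + h(-r,r) - h(-r,-r).
  At these points every monomial is \<plusminus> its value at (r,r), with the sign at (-r,-r) the product of
  the signs at (r,-r) and (-r,r); hence L is nonnegative on every square of a binomial, so on
  every SDSOS polynomial. Since g3 takes the same positive value 1 - 2 r^2 at all four points,
  a representation f3 = \<sigma>0 + \<sigma>1 g3 would give L f3 \<ge> 0. But L f3 = 8 - 16r, which is negative
  for r = 3/5, a point where g3 is still positive.\<close>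

definition sign_functional :: "real \<Rightarrow> (real \<times> real \<Rightarrow> real) \<Rightarrow> real" where
  "sign_functional r h = h (r, r) + h (r, -r) + h (-r, r) - h (-r, -r)"

lemma sign_functional_sum_list:
  "sign_functional r (\<lambda>x. \<Sum>t\<leftarrow>ts. F t x) = (\<Sum>t\<leftarrow>ts. sign_functional r (F t))"
  by (induction ts) (simp_all add: sign_functional_def algebra_simps)

lemma sign_functional_add:
  "sign_functional r (\<lambda>x. u x + v x) = sign_functional r u + sign_functional r v"
  by (simp add: sign_functional_def)

lemma mono_scale: "mono \<alpha> (a * x, b * y) = a ^ fst \<alpha> * b ^ snd \<alpha> * mono \<alpha> (x, y)"
  by (simp add: mono_def power_mult_distrib)

lemma minus_one_power_cases: "(-1::real) ^ n = 1 \<or> (-1::real) ^ n = -1"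
  by (cases "even n") auto

lemma signed_squares_nonneg:
  fixes P Q s1 s2 t1 t2 :: real
  assumes "s1 = 1 \<or> s1 = -1" "s2 = 1 \<or> s2 = -1" "t1 = 1 \<or> t1 = -1" "t2 = 1 \<or> t2 = -1"
  shows "0 \<le> (P + Q)^2 + (s2*P + t2*Q)^2 + (s1*P + t1*Q)^2 - (s1*s2*P + t1*t2*Q)^2"
proof -
  have "0 \<le> 2 * (P + Q)^2" "0 \<le> 2 * (P - Q)^2" by simp_all
  with assms show ?thesis
    by (elim disjE) (simp_all add: power2_eq_square algebra_simps)
qed

lemma sign_functional_binomial_square_nonneg:
  "0 \<le> sign_functional r (\<lambda>x. (p * mono \<alpha> x + q * mono \<beta> x)^2)"
proof -
  define P Q where "P = p * mono \<alpha> (r, r)" and "Q = q * mono \<beta> (r, r)"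
  have at: "p * mono \<alpha> (a * r, b * r) + q * mono \<beta> (a * r, b * r)
      = a ^ fst \<alpha> * b ^ snd \<alpha> * P + a ^ fst \<beta> * b ^ snd \<beta> * Q" for a b
    unfolding mono_scale P_def Q_def by (simp add: algebra_simps)
  have "sign_functional r (\<lambda>x. (p * mono \<alpha> x + q * mono \<beta> x)^2)
      = (P + Q)^2 + ((-1) ^ snd \<alpha> * P + (-1) ^ snd \<beta> * Q)^2
        + ((-1) ^ fst \<alpha> * P + (-1) ^ fst \<beta> * Q)^2
        - ((-1) ^ fst \<alpha> * (-1) ^ snd \<alpha> * P + (-1) ^ fst \<beta> * (-1) ^ snd \<beta> * Q)^2"
    using at[of 1 1] at[of 1 "-1"] at[of "-1" 1] at[of "-1" "-1"]
    by (simp add: sign_functional_def P_def Q_def)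
  also have "0 \<le> \<dots>"
    by (intro signed_squares_nonneg minus_one_power_cases)
  finally show ?thesis .
qed

lemma sign_functional_sdsos_nonneg:
  assumes "sdsos \<sigma>"
  shows "0 \<le> sign_functional r \<sigma>"
proof -
  obtain ts :: "(real \<times> real \<times> (nat \<times> nat) \<times> (nat \<times> nat)) list" where
    "\<forall>x. \<sigma> x = (\<Sum>(p, q, \<alpha>, \<beta>)\<leftarrow>ts. (p * mono \<alpha> x + q * mono \<beta> x)^2)"
    using assms unfolding sdsos_def by blast
  then have "\<sigma> = (\<lambda>x. \<Sum>t\<leftarrow>ts. (\<lambda>(p, q, \<alpha>, \<beta>) x. (p * mono \<alpha> x + q * mono \<beta> x)^2) t x)"
    by (simp add: fun_eq_iff case_prod_beta')
  then have "sign_functional r \<sigma>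
      = (\<Sum>t\<leftarrow>ts. sign_functional r ((\<lambda>(p, q, \<alpha>, \<beta>) x. (p * mono \<alpha> x + q * mono \<beta> x)^2) t))"
    by (simp only: sign_functional_sum_list)
  also have "0 \<le> \<dots>"
    by (rule sum_list_nonneg) (auto simp: sign_functional_binomial_square_nonneg)
  finally show ?thesis .
qed

lemma dsos_imp_sdsos:
  assumes "dsos \<sigma>"
  shows "sdsos \<sigma>"
proof -
  obtain A :: "(real \<times> (nat \<times> nat)) list"
    and B C :: "(real \<times> (nat \<times> nat) \<times> (nat \<times> nat)) list" where
    A: "\<forall>(c, _) \<in> set A. c \<ge> 0" and B: "\<forall>(c, _) \<in> set B. c \<ge> 0" and C: "\<forall>(c, _) \<in> set C. c \<ge> 0"
    and \<sigma>: "\<forall>x. \<sigma> x = (\<Sum>(c, \<alpha>)\<leftarrow>A. c * (mono \<alpha> x)^2)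
               + (\<Sum>(c, \<alpha>, \<beta>)\<leftarrow>B. c * (mono \<alpha> x + mono \<beta> x)^2)
               + (\<Sum>(c, \<alpha>, \<beta>)\<leftarrow>C. c * (mono \<alpha> x - mono \<beta> x)^2)"
    using assms unfolding dsos_def by blast
  define ts :: "(real \<times> real \<times> (nat \<times> nat) \<times> (nat \<times> nat)) list" where
    "ts = map (\<lambda>(c, \<alpha>). (sqrt c, 0, \<alpha>, \<alpha>)) A
        @ map (\<lambda>(c, \<alpha>, \<beta>). (sqrt c, sqrt c, \<alpha>, \<beta>)) B
        @ map (\<lambda>(c, \<alpha>, \<beta>). (sqrt c, - sqrt c, \<alpha>, \<beta>)) C"
  have sqrt_square: "c * u^2 = (sqrt c * u)^2" if "c \<ge> 0" for c u :: real
    using that by (simp add: power_mult_distrib)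
  have "\<sigma> x = (\<Sum>(p, q, \<alpha>, \<beta>)\<leftarrow>ts. (p * mono \<alpha> x + q * mono \<beta> x)^2)" for x
  proof -
    have "(\<Sum>(c, \<alpha>)\<leftarrow>A. c * (mono \<alpha> x)^2)
        = (\<Sum>(c, \<alpha>)\<leftarrow>A. (sqrt c * mono \<alpha> x + 0 * mono \<alpha> x)^2)"
      using A by (intro arg_cong[where f = sum_list] map_cong) (auto simp: sqrt_square)
    moreover have "(\<Sum>(c, \<alpha>, \<beta>)\<leftarrow>B. c * (mono \<alpha> x + mono \<beta> x)^2)
        = (\<Sum>(c, \<alpha>, \<beta>)\<leftarrow>B. (sqrt c * mono \<alpha> x + sqrt c * mono \<beta> x)^2)"
      using B by (intro arg_cong[where f = sum_list] map_cong) (auto simp: sqrt_square algebra_simps)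
    moreover have "(\<Sum>(c, \<alpha>, \<beta>)\<leftarrow>C. c * (mono \<alpha> x - mono \<beta> x)^2)
        = (\<Sum>(c, \<alpha>, \<beta>)\<leftarrow>C. (sqrt c * mono \<alpha> x + - sqrt c * mono \<beta> x)^2)"
      using C by (intro arg_cong[where f = sum_list] map_cong) (auto simp: sqrt_square algebra_simps)
    ultimately show ?thesis
      using \<sigma> by (simp add: ts_def comp_def case_prod_unfold del: split_paired_All)
  qed
  then show ?thesis
    unfolding sdsos_def by blast
qed

lemma sign_functional_f3: "sign_functional r f3 = 8 - 16 * r"
  by (simp add: sign_functional_def f3_def power2_eq_square algebra_simps)

lemma sign_functional_times_g3:
  "sign_functional r (\<lambda>x. \<sigma> x * g3 x) = (1 - 2 * r^2) * sign_functional r \<sigma>"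
  by (simp add: sign_functional_def g3_def algebra_simps)

lemma no_sdsos_certificate:
  assumes "sdsos \<sigma>0" "sdsos \<sigma>1"
  shows "\<exists>x. f3 x \<noteq> \<sigma>0 x + \<sigma>1 x * g3 x"
proof (rule ccontr)
  assume "\<not> ?thesis"
  then have "f3 = (\<lambda>x. \<sigma>0 x + \<sigma>1 x * g3 x)"
    by auto
  then have "sign_functional (3/5) f3
      = sign_functional (3/5) \<sigma>0 + sign_functional (3/5) (\<lambda>x. \<sigma>1 x * g3 x)"
    by (simp only: \<open>f3 = _\<close> sign_functional_add)
  also have "\<dots> = sign_functional (3/5) \<sigma>0 + 7/25 * sign_functional (3/5) \<sigma>1"
    by (simp add: sign_functional_times_g3 power2_eq_square)
  also have "\<dots> \<ge> 0"
    using assms by (simp add: sign_functional_sdsos_nonneg)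
  finally show False
    by (simp add: sign_functional_f3)
qed

lemma f3_pos_where_g3_nonneg:
  assumes "g3 x \<ge> 0"
  shows "f3 x > 0"
proof -
  have "(fst x + snd x)^2 \<le> 2 * ((fst x)^2 + (snd x)^2)"
    using zero_le_power2[of "fst x - snd x"] by (simp add: power2_eq_square algebra_simps)
  also have "\<dots> \<le> 2"
    using assms by (simp add: g3_def)
  finally have "fst x + snd x \<noteq> 2"
    by auto
  then show ?thesis
    by (simp add: f3_def)
qed

theorem mainTheorem3:
  shows "(\<forall>x. g3 x \<ge> 0 \<longrightarrow> f3 x > 0)
    \<and> \<not> (\<exists>\<sigma>0 \<sigma>1. sdsos \<sigma>0 \<and> sdsos \<sigma>1 \<and> (\<forall>x. f3 x = \<sigma>0 x + \<sigma>1 x * g3 x))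
    \<and> \<not> (\<exists>\<sigma>0 \<sigma>1. dsos \<sigma>0 \<and> dsos \<sigma>1 \<and> (\<forall>x. f3 x = \<sigma>0 x + \<sigma>1 x * g3 x))"
  using f3_pos_where_g3_nonneg no_sdsos_certificate dsos_imp_sdsos by blast

end
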